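(* Let $n\ge1$, $\boldsymbol\alpha=(\alpha_1,\dots,\alpha_n)\in((0,\pi)\setminus\mathcal E)^n$, $\boldsymbol\ell=(\ell_1,\dots,\ell_n)\in(0,\infty)^n$, $\sigma\in\mathbb R$. Then the matrix $\mathtt T(\boldsymbol\alpha,\boldsymbol\ell,\sigma)$ has the form $\begin{pmatrix}p_n&q_n\\ \bar q_n&\bar p_n\end{pmatrix}$ with $|p_n|^2-|q_n|^2=1$, where $$p_n=\frac{1}{\prod_{j=1}^n\sin\frac{\pi^2}{2\alpha_j}}\sum_{\substack{\boldsymbol\zeta\in\{\pm1\}^n\\ \zeta_1=1}}\mathfrak p_{\boldsymbol\zeta}\,e^{i\,\boldsymbol\ell\cdot\boldsymbol\zeta\,\sigma},\qquad q_n=\frac{-i}{\prod_{j=1}^n\sin\frac{\pi^2}{2\alpha_j}}\sum_{\substack{\boldsymbol\zeta\in\{\pm1\}^n\\ \zeta_1=1}}\mathfrak q_{\boldsymbol\zeta}\,e^{-i\,\boldsymbol\ell\cdot\boldsymbol\zeta\,\sigma}.$$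
   Context: $\mathcal E=\{\pi/(2k):k\in\mathbb N\}$. For $\alpha\notin\mathcal E$, $\mathtt A(\alpha)=\begin{pmatrix}\csc\frac{\pi^2}{2\alpha}&-i\cot\frac{\pi^2}{2\alpha}\\ i\cot\frac{\pi^2}{2\alpha}&\csc\frac{\pi^2}{2\alpha}\end{pmatrix}$, $\mathtt B(\ell,\sigma)=\operatorname{diag}(e^{i\ell\sigma},e^{-i\ell\sigma})$, and $\mathtt T(\boldsymbol\alpha,\boldsymbol\ell,\sigma)=\mathtt A(\alpha_n)\mathtt B(\ell_n,\sigma)\cdots\mathtt A(\alpha_1)\mathtt B(\ell_1,\sigma)$. For $\boldsymbol\zeta\in\{\pm1\}^n$: $\mathrm{ch}(\boldsymbol\zeta)=\{j\in\{1,\dots,n\}:\zeta_j\ne\zeta_{j+1}\}$ with cyclic convention $\zeta_{n+1}=\zeta_1$; $\widetilde{\mathrm{ch}}(\boldsymbol\zeta)=\{j\in\{1,\dots,n\}:\zeta_j\ne\zeta_{j+1}\}$ with the convention $\zeta_{n+1}=-1$ instead; $\mathfrak p_{\boldsymbol\zeta}=\prod_{j\in\mathrm{ch}(\boldsymbol\zeta)}\cos\frac{\pi^2}{2\alpha_j}$, $\mathfrak q_{\boldsymbol\zeta}=\prod_{j\in\widetilde{\mathrm{ch}}(\boldsymbol\zeta)}\cos\frac{\pi^2}{2\alpha_j}$ (empty products equal $1$); $\boldsymbol\ell\cdot\boldsymbol\zeta=\sum_j\ell_j\zeta_j$. *)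

theory Defs
  imports "HOL-Analysis.Analysis"
begin

definition excl_set :: "real set" where
  "excl_set = {pi / (2 * real k) | k::nat. k \<ge> 1}"

definition mat2 :: "complex \<Rightarrow> complex \<Rightarrow> complex \<Rightarrow> complex \<Rightarrow> complex^2^2" where
  "mat2 a b c d = (\<chi> i j. if i = 1 then (if j = 1 then a else b) else (if j = 1 then c else d))"

definition Amat :: "real \<Rightarrow> complex^2^2" where
  "Amat a = mat2 (complex_of_real (1 / sin (pi\<^sup>2 / (2*a)))) (- \<i> * complex_of_real (cot (pi\<^sup>2 / (2*a))))
                 (\<i> * complex_of_real (cot (pi\<^sup>2 / (2*a)))) (complex_of_real (1 / sin (pi\<^sup>2 / (2*a))))"

definition Bmat :: "real \<Rightarrow> real \<Rightarrow> complex^2^2" where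
  "Bmat ell sg = mat2 (cis (ell * sg)) 0 0 (cis (- (ell * sg)))"

fun Tmat :: "(nat \<Rightarrow> real) \<Rightarrow> (nat \<Rightarrow> real) \<Rightarrow> real \<Rightarrow> nat \<Rightarrow> complex^2^2" where
  "Tmat a l s 0 = mat 1"
| "Tmat a l s (Suc k) = (Amat (a (Suc k)) ** Bmat (l (Suc k)) s) ** Tmat a l s k"

definition signs1 :: "nat \<Rightarrow> (nat \<Rightarrow> real) set" where
  "signs1 n = {z. (\<forall>j\<in>{1..n}. z j = 1 \<or> z j = -1) \<and> (\<forall>j. j \<notin> {1..n} \<longrightarrow> z j = 0) \<and> z 1 = 1}"

definition ch :: "nat \<Rightarrow> (nat \<Rightarrow> real) \<Rightarrow> nat set" where
  "ch n z = {j\<in>{1..n}. z j \<noteq> (if j = n then z 1 else z (j+1))}"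

definition cht :: "nat \<Rightarrow> (nat \<Rightarrow> real) \<Rightarrow> nat set" where
  "cht n z = {j\<in>{1..n}. z j \<noteq> (if j = n then -1 else z (j+1))}"

definition pfrak :: "nat \<Rightarrow> (nat \<Rightarrow> real) \<Rightarrow> (nat \<Rightarrow> real) \<Rightarrow> real" where
  "pfrak n a z = (\<Prod>j\<in>ch n z. cos (pi\<^sup>2 / (2 * a j)))"

definition qfrak :: "nat \<Rightarrow> (nat \<Rightarrow> real) \<Rightarrow> (nat \<Rightarrow> real) \<Rightarrow> real" where
  "qfrak n a z = (\<Prod>j\<in>cht n z. cos (pi\<^sup>2 / (2 * a j)))"

definition ldot :: "nat \<Rightarrow> (nat \<Rightarrow> real) \<Rightarrow> (nat \<Rightarrow> real) \<Rightarrow> real" where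
  "ldot n l z = (\<Sum>j=1..n. l j * z j)"

end

theory Submission
  imports Defs
begin

text \<open>With theta = pi^2/(2 alpha) and c = cos theta, sin theta * A(alpha) = [[1, -i c], [i c, 1]].
  Hence left multiplication by A B keeps the shape [[p, q], [cnj q, cnj p]], and the unnormalised
  entries P = S p, Q = i S q (S the product of the sines) obey
  P' = e^(i l sigma) P + c e^(-i l sigma) cnj Q  and  Q' = e^(i l sigma) Q + c e^(-i l sigma) cnj P.
  The sign-vector sums obey the same recursion when split by the last sign: repeating the previous
  sign adds no factor, while switching it adds the factor c and exchanges the cyclic sign changes
  with those terminated by -1. Finally det A = csc^2 - cot^2 = 1 and det B = 1, so
  |p|^2 - |q|^2 = det T = 1.\<close>

abbreviation \<theta> :: "real \<Rightarrow> real" where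
  "\<theta> x \<equiv> pi\<^sup>2 / (2 * x)"

lemma sin_\<theta>_nonzero:
  assumes "0 < x" "x \<notin> excl_set"
  shows "sin (\<theta> x) \<noteq> 0"
proof
  assume "sin (\<theta> x) = 0"
  then obtain i :: int where i: "\<theta> x = of_int i * pi"
    by (auto simp: sin_zero_iff_int2)
  have "\<theta> x > 0" using assms(1) by simp
  with i have "i > 0" by (simp add: zero_less_mult_iff)
  with i assms(1) have "x = pi / (2 * real (nat i))"
    by (simp add: field_simps power2_eq_square)
  moreover from \<open>i > 0\<close> have "nat i \<ge> 1" by simp
  ultimately have "x \<in> excl_set" unfolding excl_set_def by blast
  with assms(2) show False by simp
qed

lemma mat2_mult:
  "mat2 a b c d ** mat2 e f g h = mat2 (a*e + b*g) (a*f + b*h) (c*e + d*g) (c*f + d*h)"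
  unfolding mat2_def matrix_matrix_mult_def by (simp add: vec_eq_iff forall_2 sum_2)

lemma mat_1_eq_mat2: "(mat 1 :: complex^2^2) = mat2 1 0 0 1"
  unfolding mat2_def mat_def by (simp add: vec_eq_iff forall_2)

lemma mat2_eq_iff: "mat2 a b c d = mat2 a' b' c' d' \<longleftrightarrow> a = a' \<and> b = b' \<and> c = c' \<and> d = d'"
  unfolding mat2_def by (auto simp: vec_eq_iff forall_2)

lemma det_mat2: "det (mat2 a b c d) = a * d - b * c"
  unfolding mat2_def by (simp add: det_2)

lemma det_Amat:
  assumes "sin (\<theta> x) \<noteq> 0"
  shows "det (Amat x) = 1"
proof -
  have "det (Amat x) = complex_of_real ((1 - (cos (\<theta> x))\<^sup>2) / (sin (\<theta> x))\<^sup>2)"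
    unfolding Amat_def det_mat2 cot_def using assms by (simp add: field_simps power2_eq_square)
  also have "\<dots> = 1"
    using assms by (simp add: cos_squared_eq)
  finally show ?thesis .
qed

lemma det_Bmat: "det (Bmat y s) = 1"
  unfolding Bmat_def det_mat2 by (simp add: cis_mult)

lemma det_Tmat:
  assumes "\<forall>j\<in>{1..n}. sin (\<theta> (a j)) \<noteq> 0"
  shows "det (Tmat a l s n) = 1"
  using assms by (induction n) (simp_all add: det_mul det_Amat det_Bmat)

lemma Amat_Bmat_mult_mat2:
  fixes x y s :: real and p q :: complex
  defines "step u v \<equiv> (cis (y * s) * u - \<i> * cos (\<theta> x) * cis (- (y * s)) * cnj v) / sin (\<theta> x)"
  shows "Amat x ** Bmat y s ** mat2 p q (cnj q) (cnj p) =
         mat2 (step p q) (step q p) (cnj (step q p)) (cnj (step p q))"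
  unfolding Amat_def Bmat_def mat2_mult mat2_eq_iff step_def cot_def
  by (simp add: cis_cnj algebra_simps add_divide_distrib diff_divide_distrib)

lemma fun_upd_Suc_in_signs1:
  assumes "n \<ge> 1" "z \<in> signs1 n" "b = 1 \<or> b = -1"
  shows "z(Suc n := b) \<in> signs1 (Suc n)"
  using assms unfolding signs1_def by (auto simp: le_Suc_eq)

lemma signs1_restrict:
  assumes "n \<ge> 1" "z \<in> signs1 (Suc n)"
  shows "z(Suc n := 0) \<in> signs1 n" "z (Suc n) = 1 \<or> z (Suc n) = -1"
  using assms unfolding signs1_def by (auto simp: le_Suc_eq)

lemma signs1_first: "z \<in> signs1 n \<Longrightarrow> z 1 = 1"
  unfolding signs1_def by blast

lemma signs1_Suc:
  assumes "n \<ge> 1"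
  shows "signs1 (Suc n) = (\<lambda>z. z(Suc n := 1)) ` signs1 n \<union> (\<lambda>z. z(Suc n := -1)) ` signs1 n"
proof (intro equalityI subsetI)
  fix z assume z: "z \<in> signs1 (Suc n)"
  have "z = (z(Suc n := 0))(Suc n := z (Suc n))" by simp
  with signs1_restrict[OF assms z]
  show "z \<in> (\<lambda>z. z(Suc n := 1)) ` signs1 n \<union> (\<lambda>z. z(Suc n := -1)) ` signs1 n"
    by (metis UnI1 UnI2 image_eqI)
qed (use fun_upd_Suc_in_signs1[OF assms] in blast)

lemma signs1_1: "signs1 1 = {\<lambda>j. if j = 1 then 1 else 0}"
  unfolding signs1_def by (auto simp: fun_eq_iff)

lemma finite_signs1: "n \<ge> 1 \<Longrightarrow> finite (signs1 n)"
  by (induction n rule: dec_induct) (simp_all only: signs1_1 signs1_Suc finite_Un finite_imageI finite.intros)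

lemma sum_signs1_Suc:
  assumes "n \<ge> 1"
  shows "(\<Sum>z\<in>signs1 (Suc n). f z) =
         (\<Sum>z\<in>signs1 n. f (z(Suc n := 1))) + (\<Sum>z\<in>signs1 n. f (z(Suc n := -1)))"
proof -
  have out: "z (Suc n) = 0" if "z \<in> signs1 n" for z
    using that unfolding signs1_def by auto
  have inj: "inj_on (\<lambda>z. z(Suc n := b)) (signs1 n)" for b :: real
    by (rule inj_onI) (metis out fun_upd_triv fun_upd_upd)
  have "(\<lambda>z. z(Suc n := 1)) ` signs1 n \<inter> (\<lambda>z. z(Suc n := -1)) ` signs1 n = {}"
    by (auto simp: fun_eq_iff) (metis fun_upd_same one_neq_neg_one)
  then show ?thesis
    unfolding signs1_Suc[OF assms]
    by (simp add: sum.union_disjoint finite_signs1[OF assms] sum.reindex[OF inj])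
qed

lemma ldot_fun_upd_Suc: "ldot (Suc n) l (z(Suc n := b)) = ldot n l z + l (Suc n) * b"
  unfolding ldot_def by (simp add: sum.cl_ivl_Suc)

lemma ch_fun_upd_Suc_1:
  assumes "n \<ge> 1" "z 1 = 1"
  shows "ch (Suc n) (z(Suc n := 1)) = ch n z"
  using assms unfolding ch_def by (auto simp: le_Suc_eq One_nat_def)

lemma ch_fun_upd_Suc_neg1:
  assumes "n \<ge> 1" "z 1 = 1"
  shows "ch (Suc n) (z(Suc n := -1)) = insert (Suc n) (cht n z)"
  using assms unfolding ch_def cht_def by (auto simp: le_Suc_eq One_nat_def)

lemma cht_fun_upd_Suc_1:
  assumes "n \<ge> 1" "z 1 = 1"
  shows "cht (Suc n) (z(Suc n := 1)) = insert (Suc n) (ch n z)"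
  using assms unfolding ch_def cht_def by (auto simp: le_Suc_eq One_nat_def)

lemma cht_fun_upd_Suc_neg1:
  assumes "n \<ge> 1"
  shows "cht (Suc n) (z(Suc n := -1)) = cht n z"
  using assms unfolding cht_def by (auto simp: le_Suc_eq)

lemma pfrak_fun_upd_Suc_1:
  "n \<ge> 1 \<Longrightarrow> z 1 = 1 \<Longrightarrow> pfrak (Suc n) a (z(Suc n := 1)) = pfrak n a z"
  unfolding pfrak_def by (simp add: ch_fun_upd_Suc_1)

lemma pfrak_fun_upd_Suc_neg1:
  "n \<ge> 1 \<Longrightarrow> z 1 = 1 \<Longrightarrow> pfrak (Suc n) a (z(Suc n := -1)) = cos (\<theta> (a (Suc n))) * qfrak n a z"
  unfolding pfrak_def qfrak_def by (simp add: ch_fun_upd_Suc_neg1 cht_def)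

lemma qfrak_fun_upd_Suc_1:
  "n \<ge> 1 \<Longrightarrow> z 1 = 1 \<Longrightarrow> qfrak (Suc n) a (z(Suc n := 1)) = cos (\<theta> (a (Suc n))) * pfrak n a z"
  unfolding pfrak_def qfrak_def by (simp add: cht_fun_upd_Suc_1 ch_def)

lemma qfrak_fun_upd_Suc_neg1:
  "n \<ge> 1 \<Longrightarrow> qfrak (Suc n) a (z(Suc n := -1)) = qfrak n a z"
  unfolding qfrak_def by (simp add: cht_fun_upd_Suc_neg1)

definition psum :: "nat \<Rightarrow> (nat \<Rightarrow> real) \<Rightarrow> (nat \<Rightarrow> real) \<Rightarrow> real \<Rightarrow> complex" where
  "psum n a l s = (\<Sum>z\<in>signs1 n. complex_of_real (pfrak n a z) * cis (ldot n l z * s))"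

definition qsum :: "nat \<Rightarrow> (nat \<Rightarrow> real) \<Rightarrow> (nat \<Rightarrow> real) \<Rightarrow> real \<Rightarrow> complex" where
  "qsum n a l s = (\<Sum>z\<in>signs1 n. complex_of_real (qfrak n a z) * cis (- (ldot n l z * s)))"

lemma psum_1: "psum 1 a l s = cis (l 1 * s)"
  unfolding psum_def pfrak_def ldot_def signs1_1 ch_def by simp

lemma qsum_1: "qsum 1 a l s = cos (\<theta> (a 1)) * cis (- (l 1 * s))"
proof -
  have "cht 1 (\<lambda>j. if j = 1 then 1 else 0) = {1}"
    unfolding cht_def by auto
  then show ?thesis
    unfolding qsum_def qfrak_def ldot_def signs1_1 by simp
qed

lemma psum_Suc:
  assumes "n \<ge> 1"
  shows "psum (Suc n) a l s =
         cis (l (Suc n) * s) * psum n a l s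
         + cos (\<theta> (a (Suc n))) * cis (- (l (Suc n) * s)) * cnj (qsum n a l s)"
proof -
  have "pfrak (Suc n) a (z(Suc n := 1)) = pfrak n a z"
       "pfrak (Suc n) a (z(Suc n := -1)) = cos (\<theta> (a (Suc n))) * qfrak n a z"
    if "z \<in> signs1 n" for z
    using pfrak_fun_upd_Suc_1 pfrak_fun_upd_Suc_neg1 assms signs1_first[OF that] by blast+
  then show ?thesis
    unfolding psum_def qsum_def sum_signs1_Suc[OF assms] sum_distrib_left cnj_sum
    by (intro arg_cong2[where f = "(+)"] sum.cong refl)
       (simp_all add: ldot_fun_upd_Suc cis_cnj cis_mult algebra_simps)
qed

lemma qsum_Suc:
  assumes "n \<ge> 1"
  shows "qsum (Suc n) a l s =
         cis (l (Suc n) * s) * qsum n a l s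
         + cos (\<theta> (a (Suc n))) * cis (- (l (Suc n) * s)) * cnj (psum n a l s)"
proof -
  have "qfrak (Suc n) a (z(Suc n := 1)) = cos (\<theta> (a (Suc n))) * pfrak n a z"
       "qfrak (Suc n) a (z(Suc n := -1)) = qfrak n a z"
    if "z \<in> signs1 n" for z
    using qfrak_fun_upd_Suc_1 qfrak_fun_upd_Suc_neg1 assms signs1_first[OF that] by blast+
  then show ?thesis
    unfolding psum_def qsum_def sum_signs1_Suc[OF assms] sum_distrib_left cnj_sum
    by (subst add.commute, intro arg_cong2[where f = "(+)"] sum.cong refl)
       (simp_all add: ldot_fun_upd_Suc cis_cnj cis_mult algebra_simps)
qed

lemma Tmat_eq_mat2:
  assumes "n \<ge> 1" "\<forall>j\<in>{1..n}. sin (\<theta> (a j)) \<noteq> 0"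
  shows "Tmat a l s n =
         mat2 (psum n a l s / (\<Prod>j=1..n. sin (\<theta> (a j))))
              (- \<i> * qsum n a l s / (\<Prod>j=1..n. sin (\<theta> (a j))))
              (cnj (- \<i> * qsum n a l s / (\<Prod>j=1..n. sin (\<theta> (a j)))))
              (cnj (psum n a l s / (\<Prod>j=1..n. sin (\<theta> (a j)))))"
  using assms
proof (induction n rule: dec_induct)
  case base
  have "Tmat a l s 1 = Amat (a 1) ** Bmat (l 1) s ** mat2 1 0 (cnj 0) (cnj 1)"
    by (simp add: mat_1_eq_mat2)
  also have "\<dots> = mat2 (psum 1 a l s / sin (\<theta> (a 1))) (- \<i> * qsum 1 a l s / sin (\<theta> (a 1)))
                       (cnj (- \<i> * qsum 1 a l s / sin (\<theta> (a 1)))) (cnj (psum 1 a l s / sin (\<theta> (a 1))))"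
    unfolding Amat_Bmat_mult_mat2 psum_1 qsum_1 by (simp add: mat2_eq_iff cis_cnj)
  finally show ?case by simp
next
  case (step m)
  define S where "S = (\<Prod>j=1..m. sin (\<theta> (a j)))"
  define p where "p = psum m a l s / S"
  define q where "q = - \<i> * qsum m a l s / S"
  have "S \<noteq> 0" "sin (\<theta> (a (Suc m))) \<noteq> 0"
    using step.prems unfolding S_def by auto
  have "Tmat a l s (Suc m) = Amat (a (Suc m)) ** Bmat (l (Suc m)) s ** mat2 p q (cnj q) (cnj p)"
    using step unfolding S_def p_def q_def by auto
  also have "\<dots> = mat2 (psum (Suc m) a l s / (S * sin (\<theta> (a (Suc m)))))
                       (- \<i> * qsum (Suc m) a l s / (S * sin (\<theta> (a (Suc m)))))
                       (cnj (- \<i> * qsum (Suc m) a l s / (S * sin (\<theta> (a (Suc m))))))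
                       (cnj (psum (Suc m) a l s / (S * sin (\<theta> (a (Suc m))))))"
    unfolding Amat_Bmat_mult_mat2 psum_Suc[OF step.hyps(1)] qsum_Suc[OF step.hyps(1)] p_def q_def
    using \<open>S \<noteq> 0\<close> \<open>sin (\<theta> (a (Suc m))) \<noteq> 0\<close> by (simp add: mat2_eq_iff cis_cnj field_simps)
  finally show ?case
    unfolding S_def by (simp add: prod.cl_ivl_Suc)
qed

theorem theorem6p1:
  fixes n :: nat and a l :: "nat \<Rightarrow> real" and s :: real
  assumes "n \<ge> 1"
    and "\<forall>j\<in>{1..n}. 0 < a j \<and> a j < pi \<and> a j \<notin> excl_set"
    and "\<forall>j\<in>{1..n}. 0 < l j"
  shows "let S = (\<Prod>j=1..n. sin (pi\<^sup>2 / (2 * a j)));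
             p = (\<Sum>z\<in>signs1 n. complex_of_real (pfrak n a z) * cis (ldot n l z * s)) / complex_of_real S;
             q = (- \<i>) * (\<Sum>z\<in>signs1 n. complex_of_real (qfrak n a z) * cis (- (ldot n l z * s))) / complex_of_real S
         in Tmat a l s n = mat2 p q (cnj q) (cnj p) \<and> (cmod p)\<^sup>2 - (cmod q)\<^sup>2 = 1"
proof -
  define p where "p = psum n a l s / (\<Prod>j=1..n. sin (\<theta> (a j)))"
  define q where "q = - \<i> * qsum n a l s / (\<Prod>j=1..n. sin (\<theta> (a j)))"
  have sin_nonzero: "\<forall>j\<in>{1..n}. sin (\<theta> (a j)) \<noteq> 0"
    using assms(2) sin_\<theta>_nonzero by blast
  have T: "Tmat a l s n = mat2 p q (cnj q) (cnj p)"
    unfolding p_def q_def using Tmat_eq_mat2[OF assms(1) sin_nonzero] .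
  have "complex_of_real ((cmod p)\<^sup>2 - (cmod q)\<^sup>2) = det (Tmat a l s n)"
    unfolding T det_mat2 of_real_diff complex_norm_square ..
  also have "\<dots> = 1"
    using det_Tmat[OF sin_nonzero] .
  finally have "(cmod p)\<^sup>2 - (cmod q)\<^sup>2 = 1"
    by (simp only: of_real_eq_1_iff)
  with T show ?thesis
    unfolding p_def q_def psum_def qsum_def Let_def by simp
qed

end
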